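(* Let $b\geq2$ and even, $k\leq n-2$ and $\mathbf s=s_1s_2\ldots s_k$. If $\mathbf t$ is the first sequence in $\mathbf s\,|\,R_n(b)$ when this set is listed in co-Reflected Gray Code Order, then $\mathbf t$ has one of the following forms: 1. $\mathbf t=\mathbf sM0\ldots0$ if $U_{k+1}$ is odd and $M$ is even, 2. $\mathbf t=\mathbf sM(M+1)0\ldots0$ if $U_{k+1}$ is odd and $M$ is odd, 3. $\mathbf t=\mathbf s0\ldots0$ if $U_{k+1}$ is even, where $M=\min\{b,\max\{s_i\}_{i=1}^k+1\}$ and $U_{k+1}=\sum_{i=1}^k[s_i\neq0 \text{ and } s_i \text{ is even}]$.
   Context: A restricted growth function of length $n$ is an integer sequence $s_1s_2\ldots s_n$ with $s_1=0$ and $0\leq s_{i+1}\leq \max\{s_j\}_{j=1}^i+1$ for $1\leq i\leq n-1$; $R_n$ is the set of these, and for $b\geq1$, $R_n(b)=\{s_1\ldots s_n\in R_n : \max\{s_i\}_{i=1}^n\leq b\}$. For a sequence $\mathbf u$, $\mathbf u\,|\,S$ denotes the subset of $S$ of sequences having prefix $\mathbf u$. The co-Reflected Gray Code Order on $\{0,1,\ldots,m-1\}^n$ ($m\geq2$) is defined by: $s_1\ldots s_n$ is less than $t_1\ldots t_n$ if, for the position $k$ with $s_i=t_i$ ($1\leq i\leq k-1$) and $s_k\neq t_k$, either $U_k$ is even and $s_k<t_k$, or $U_k$ is odd and $s_k>t_k$, where $U_k=|\{i\in\{1,\ldots,k-1\}: s_i\neq0,\ s_i \text{ even}\}|$. $[P]$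 denotes the Iverson bracket (1 if $P$ is true, 0 otherwise). *)

theory Defs
  imports Main
begin

text \<open>Sequences are 0-indexed lists: paper's s_{i+1} is s ! i.\<close>

definition RGF :: "nat \<Rightarrow> nat list set" where
  "RGF n = {s. length s = n \<and> (n \<ge> 1 \<longrightarrow> s ! 0 = 0) \<and>
     (\<forall>i. i + 1 < n \<longrightarrow> s ! (i + 1) \<le> Max (set (take (i + 1) s)) + 1)}"

definition RGFb :: "nat \<Rightarrow> nat \<Rightarrow> nat list set" where
  "RGFb n b = {s \<in> RGF n. \<forall>x \<in> set s. x \<le> b}"

definition with_prefix :: "nat list \<Rightarrow> nat list set \<Rightarrow> nat list set" where
  "with_prefix u S = {t \<in> S. take (length u) t = u}"

text \<open>U_{k+1} in the paper (number of nonzero even entries among the first k).\<close>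
definition Ucount :: "nat list \<Rightarrow> nat \<Rightarrow> nat" where
  "Ucount s k = card {i. i < k \<and> s ! i \<noteq> 0 \<and> even (s ! i)}"

definition coRGC_less :: "nat list \<Rightarrow> nat list \<Rightarrow> bool" where
  "coRGC_less s t \<longleftrightarrow> length s = length t \<and>
     (\<exists>k < length s. take k s = take k t \<and> s ! k \<noteq> t ! k \<and>
        ((even (Ucount s k) \<and> s ! k < t ! k) \<or> (odd (Ucount s k) \<and> s ! k > t ! k)))"

definition is_first :: "nat list \<Rightarrow> nat list set \<Rightarrow> bool" where
  "is_first t S \<longleftrightarrow> t \<in> S \<and> (\<forall>u \<in> S. u \<noteq> t \<longrightarrow> coRGC_less t u)"

end

theory Submission
  imports Defs
begin

text \<open>The first sequence of s | R_n(b) in co-RGC order is the greedy completion of s: at each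
  later position it takes 0 if U is even and the largest admissible entry min b (max + 1) if U is
  odd. At the first position where another sequence of the set differs from it, that sequence
  therefore has a larger entry under even U and a smaller one under odd U, so it comes later.
  Computing the greedy completion gives the three forms: once U is even only zeros follow, and an
  odd U is made even by the entry M if M is even and by the entry M + 1 if M is odd.\<close>

lemma Ucount_cong_take:
  assumes "take j a = take j c"
  shows "Ucount a j = Ucount c j"
proof -
  have "\<And>i. i < j \<Longrightarrow> a ! i = c ! i"
    using assms by (metis nth_take)
  then show ?thesis
    unfolding Ucount_def by (metis (no_types, lifting) Collect_cong)
qed

lemma Ucount_Suc:
  "Ucount a (Suc j) = Ucount a j + (if a ! j \<noteq> 0 \<and> even (a ! j) then 1 else 0)"
proof -
  let ?P = "\<lambda>i. a ! i \<noteq> 0 \<and> even (a ! i)"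
  have "{i. i < Suc j \<and> ?P i} = {i. i < j \<and> ?P i} \<union> (if ?P j then {j} else {})"
    by (auto simp: less_Suc_eq)
  then show ?thesis
    unfolding Ucount_def by auto
qed

lemma Ucount_snoc:
  "Ucount (u @ [x]) (Suc (length u)) = Ucount u (length u) + (if x \<noteq> 0 \<and> even x then 1 else 0)"
  using Ucount_cong_take[of "length u" "u @ [x]" u] by (simp add: Ucount_Suc)

definition coRGC_min_entry :: "nat \<Rightarrow> nat list \<Rightarrow> nat \<Rightarrow> nat" where
  "coRGC_min_entry b c j = (if even (Ucount c j) then 0 else min b (Max (set (take j c)) + 1))"

lemma coRGC_min_entry_cong_take:
  assumes "take j a = take j c"
  shows "coRGC_min_entry b a j = coRGC_min_entry b c j"
  unfolding coRGC_min_entry_def using Ucount_cong_take[OF assms] assms by simp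

lemma coRGC_min_entry_le: "coRGC_min_entry b c j \<le> min b (Max (set (take j c)) + 1)"
  unfolding coRGC_min_entry_def by simp

fun coRGC_greedy :: "nat \<Rightarrow> nat \<Rightarrow> nat list \<Rightarrow> nat list" where
  "coRGC_greedy b 0 u = u"
| "coRGC_greedy b (Suc m) u = coRGC_greedy b m (u @ [coRGC_min_entry b u (length u)])"

lemma take_coRGC_greedy: "take (length u) (coRGC_greedy b m u) = u"
proof (induction m arbitrary: u)
  case (Suc m)
  let ?v = "u @ [coRGC_min_entry b u (length u)]"
  have "take (length u) (coRGC_greedy b (Suc m) u)
      = take (length u) (take (length ?v) (coRGC_greedy b m ?v))"
    by simp
  also have "\<dots> = u"
    using Suc.IH[of ?v] by simp
  finally show ?case .
qed simp

lemma coRGC_greedy_nth: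
  assumes "length u \<le> j" "j < length u + m"
  shows "coRGC_greedy b m u ! j = coRGC_min_entry b (coRGC_greedy b m u) j"
  using assms
proof (induction m arbitrary: u)
  case (Suc m)
  define x where "x = coRGC_min_entry b u (length u)"
  let ?g = "coRGC_greedy b m (u @ [x])"
  show ?case
  proof (cases "j = length u")
    case True
    have prefix: "take (Suc (length u)) ?g = u @ [x]"
      using take_coRGC_greedy[of "u @ [x]" b m] by simp
    have "?g ! length u = take (Suc (length u)) ?g ! length u"
      by simp
    then have "?g ! length u = x"
      using prefix by simp
    moreover have "take (length u) ?g = take (length u) (take (Suc (length u)) ?g)"
      by simp
    then have "take (length u) ?g = take (length u) u"
      using prefix by simp
    ultimately show ?thesis
      using True x_def coRGC_min_entry_cong_take by simp
  next
    case False
    then show ?thesis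
      using Suc.IH[of "u @ [x]"] Suc.prems x_def by simp
  qed
qed simp

lemma coRGC_greedy_even:
  "even (Ucount u (length u)) \<Longrightarrow> coRGC_greedy b m u = u @ replicate m 0"
proof (induction m arbitrary: u)
  case (Suc m)
  then have "coRGC_greedy b (Suc m) u = coRGC_greedy b m (u @ [0])"
    by (simp add: coRGC_min_entry_def)
  also have "\<dots> = u @ replicate (Suc m) 0"
    using Suc Ucount_snoc[of u 0] by (simp add: replicate_app_Cons_same)
  finally show ?case .
qed simp

lemma RGFb_snoc:
  assumes "s \<in> RGFb l b" "s \<noteq> []" "x \<le> min b (Max (set s) + 1)"
  shows "s @ [x] \<in> RGFb (Suc l) b"
proof -
  have l: "length s = l"
    using assms(1) by (simp add: RGFb_def RGF_def)
  have "(s @ [x]) ! (i + 1) \<le> Max (set (take (i + 1) (s @ [x]))) + 1" if "i + 1 < Suc l" for i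
  proof (cases "i + 1 < l")
    case True
    then show ?thesis
      using assms(1) l by (simp add: RGFb_def RGF_def nth_append)
  next
    case False
    then have "i + 1 = l"
      using that by simp
    then show ?thesis
      using assms(3) l by (simp add: nth_append)
  qed
  then show ?thesis
    using assms l by (auto simp: RGFb_def RGF_def nth_append)
qed

lemma coRGC_greedy_in_RGFb:
  "u \<in> RGFb (length u) b \<Longrightarrow> u \<noteq> [] \<Longrightarrow> coRGC_greedy b m u \<in> RGFb (length u + m) b"
proof (induction m arbitrary: u)
  case (Suc m)
  have "u @ [coRGC_min_entry b u (length u)] \<in> RGFb (Suc (length u)) b"
    using RGFb_snoc[OF Suc.prems] coRGC_min_entry_le[of b u "length u"] by simp
  then show ?case
    using Suc.IH[of "u @ [coRGC_min_entry b u (length u)]"] by simp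
qed simp

lemma take_in_RGFb:
  assumes "t \<in> RGFb n b" "k \<le> n"
  shows "take k t \<in> RGFb k b"
  using assms by (auto simp: RGFb_def RGF_def min_def dest: in_set_takeD)

lemma RGFb_nth_le:
  assumes "t \<in> RGFb n b" "1 \<le> j" "j < n"
  shows "t ! j \<le> min b (Max (set (take j t)) + 1)"
proof -
  obtain i where i: "j = i + 1"
    using assms(2) by (metis add.commute le_Suc_ex)
  have "t ! j \<le> Max (set (take j t)) + 1"
    using assms i by (simp add: RGFb_def RGF_def)
  moreover have "t ! j \<le> b"
    using assms by (auto simp: RGFb_def RGF_def)
  ultimately show ?thesis
    by simp
qed

lemma not_coRGC_less_greedy:
  assumes "t \<in> RGFb n b" "take k t = take k c" "1 \<le> k"
    and greedy: "\<And>j. k \<le> j \<Longrightarrow> j < n \<Longrightarrow> c ! j = coRGC_min_entry b c j"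
  shows "\<not> coRGC_less t c"
proof
  assume "coRGC_less t c"
  then obtain j where j: "j < length t" "take j t = take j c" "t ! j \<noteq> c ! j"
    and order: "(even (Ucount t j) \<and> t ! j < c ! j) \<or> (odd (Ucount t j) \<and> t ! j > c ! j)"
    unfolding coRGC_less_def by auto
  have n: "length t = n"
    using assms(1) by (simp add: RGFb_def RGF_def)
  have "k \<le> j"
    using j(3) assms(2) by (metis not_le nth_take)
  then have "c ! j = coRGC_min_entry b t j"
    using greedy j(1) n coRGC_min_entry_cong_take[OF j(2)] by simp
  moreover have "t ! j \<le> min b (Max (set (take j t)) + 1)"
    using RGFb_nth_le assms(1,3) \<open>k \<le> j\<close> j(1) n by simp
  ultimately show False
    using order unfolding coRGC_min_entry_def
    by (cases "even (Ucount t j)") (simp_all add: min_less_iff_disj)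
qed

lemma is_first_with_prefix_RGFb:
  assumes first: "is_first t (with_prefix s (RGFb n b))"
    and "length s = k" "1 \<le> k" "k \<le> n"
  shows "t = coRGC_greedy b (n - k) s"
proof (rule ccontr)
  let ?c = "coRGC_greedy b (n - k) s"
  assume "t \<noteq> ?c"
  have t: "t \<in> RGFb n b" "take k t = s"
    using first assms(2) by (auto simp: is_first_def with_prefix_def)
  have "s \<in> RGFb k b"
    using take_in_RGFb[OF t(1) assms(4)] t(2) by simp
  moreover have "s \<noteq> []"
    using assms(2,3) by auto
  ultimately have "?c \<in> RGFb n b"
    using coRGC_greedy_in_RGFb[of s b "n - k"] assms(2,4) by simp
  moreover have "take k ?c = s"
    using take_coRGC_greedy[of s b "n - k"] assms(2) by simp
  ultimately have "coRGC_less t ?c"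
    using first \<open>t \<noteq> ?c\<close> assms(2) by (auto simp: is_first_def with_prefix_def)
  moreover have "\<And>j. k \<le> j \<Longrightarrow> j < n \<Longrightarrow> ?c ! j = coRGC_min_entry b ?c j"
    using coRGC_greedy_nth assms by simp
  ultimately show False
    using not_coRGC_less_greedy[OF t(1) _ assms(3)] t(2) \<open>take k ?c = s\<close> by simp
qed

theorem proposition4:
  fixes b n k :: nat and s t :: "nat list"
  assumes "b \<ge> 2" and "even b" and "1 \<le> k" and "k + 2 \<le> n" and "length s = k"
    and "is_first t (with_prefix s (RGFb n b))"
  defines "M \<equiv> min b (Max (set s) + 1)"
  shows "(odd (Ucount s k) \<and> even M \<longrightarrow> t = s @ [M] @ replicate (n - k - 1) 0)
       \<and> (odd (Ucount s k) \<and> odd M \<longrightarrow> t = s @ [M, M + 1] @ replicate (n - k - 2) 0)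
       \<and> (even (Ucount s k) \<longrightarrow> t = s @ replicate (n - k) 0)"
proof (intro conjI impI; (elim conjE)?)
  define m where "m = n - k - 2"
  have m: "n - k = Suc (Suc m)"
    using assms(4) by (simp add: m_def)
  have t: "t = coRGC_greedy b (n - k) s"
    using is_first_with_prefix_RGFb assms(3-6) by simp
  then show "even (Ucount s k) \<Longrightarrow> t = s @ replicate (n - k) 0"
    using coRGC_greedy_even assms(5) by simp
  assume U: "odd (Ucount s k)"
  then have tM: "t = coRGC_greedy b (Suc m) (s @ [M])"
    using t m assms(5) by (simp add: coRGC_min_entry_def M_def)
  have UM: "Ucount (s @ [M]) (Suc k) = Ucount s k + (if even M then 1 else 0)"
    using Ucount_snoc[of s M] assms(1,5) by (simp add: M_def)
  show "t = s @ [M] @ replicate (n - k - 1) 0" if "even M"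
  proof -
    have "even (Ucount (s @ [M]) (length (s @ [M])))"
      using UM U that assms(5) by simp
    then show ?thesis
      using tM m by (simp only: coRGC_greedy_even) simp
  qed
  assume "odd M"
  then have "M = Max (set s) + 1" "M + 1 \<le> b"
    using assms(2) unfolding M_def by (auto simp: min_def split: if_splits)
  moreover have "s \<noteq> []"
    using assms(3,5) by auto
  ultimately have "Max (set (s @ [M])) = M" "M + 1 \<le> b"
    by simp_all
  then have "coRGC_min_entry b (s @ [M]) (Suc k) = M + 1"
    using U UM \<open>odd M\<close> assms(5) by (simp add: coRGC_min_entry_def)
  then have "t = coRGC_greedy b m (s @ [M, M + 1])"
    using tM assms(5) by simp
  moreover have "even (Ucount (s @ [M, M + 1]) (length (s @ [M, M + 1])))"
    using Ucount_snoc[of "s @ [M]" "M + 1"] UM U \<open>odd M\<close> assms(5) by simp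
  ultimately show "t = s @ [M, M + 1] @ replicate (n - k - 2) 0"
    using m by (simp only: coRGC_greedy_even) simp
qed

end
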